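(* Let $\Lambda_{\mathbf q}$, the bar resolution $\mathbb B(\Lambda_{\mathbf q})$, the elements $f_\beta$ and the submodules $\mathbb P_m$ be as in the context. Then the bar differential maps $\mathbb P_m$ into $\mathbb P_{m-1}$ for every $m$, so $\mathbb P=(\mathbb P_m)_m$ is a subcomplex of $\mathbb B(\Lambda_{\mathbf q})$; moreover, for $|\beta|=m$, the bar differential sends $\tilde f_\beta$ to $$\sum_{j=1}^n\Big(\prod_{l<j}q_{l,j}^{\beta_l}\,x_j\tilde f_{\beta-[j]}+(-1)^m\prod_{l>j}q_{j,l}^{\beta_l}\,\tilde f_{\beta-[j]}x_j\Big).$$
   Context: $k$ is a field of characteristic $0$. Fix $n\ge1$ and $q_{i,j}\in k^*$ with $q_{j,i}=q_{i,j}^{-1}$, $q_{i,i}=-1$, and let $\Lambda_{\mathbf q}=k\langle x_1,\dots,x_n\mid x_ix_j=-q_{i,j}x_jx_i,\ x_i^2=0\rangle$. The bar resolution $\mathbb B(\Lambda_{\mathbf q})$ has $\mathbb B_m=\Lambda_{\mathbf q}^{\otimes(m+2)}$ (tensor over $k$) with differential $d(a_0\otimes\cdots\otimes a_{m+1})=\sum_{i=0}^m(-1)^ia_0\otimes\cdots\otimes a_ia_{i+1}\otimes\cdots\otimes a_{m+1}$. For $\beta\in\mathbb Z^n$ let $|\beta|=\sum\beta_i$ and $[l]$ the $l$-th unit vector. Define $f_\beta\in\Lambda_{\mathbf q}^{\otimes|\beta|}$ by: $f_{(0,\dots,0)}=1$, $f_{[l]}=x_l$, $f_\beta=0$ if some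 $\beta_l<0$, and for $\beta\in\mathbb N^n$, $f_\beta=\sum_{l=1}^n\prod_{k>l}q_{l,k}^{\beta_k}\,f_{\beta-[l]}\otimes x_l$. Put $\tilde f_\beta=1\otimes f_\beta\otimes 1\in\mathbb B_{|\beta|}$ and let $\mathbb P_m=\bigoplus_{\beta\in\mathbb N^n,|\beta|=m}\Lambda_{\mathbf q}\otimes f_\beta\otimes\Lambda_{\mathbf q}\subseteq\mathbb B_m$, the $\Lambda_{\mathbf q}^e$-submodule generated by the $\tilde f_\beta$ with $|\beta|=m$. *)

theory Defs
  imports Main
begin

text \<open>Concrete model of the quantum exterior algebra Lambda_q on generators x_1..x_n,
  realised on its standard k-basis x_S (S a subset of {1..n}, x_S the increasing
  product of the x_i, i in S).  An element of Lambda_q is its coefficient function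
  nat set => 'k (supported on subsets of {1..n}); an element of the m-fold tensor
  power over k is a coefficient function on lists of m such subsets.\<close>

type_synonym 'k lam = "nat set \<Rightarrow> 'k"
type_synonym 'k tens = "nat set list \<Rightarrow> 'k"

definition ebas :: "nat set \<Rightarrow> 'k::field lam" where
  "ebas S = (\<lambda>U. if U = S then 1 else 0)"

text \<open>x_S x_T = qcoef q S T x_(S union T) for disjoint S, T (from x_s x_t = - q s t x_t x_s);
  x_S x_T = 0 if S, T meet (from x_i^2 = 0).\<close>
definition qcoef :: "(nat \<Rightarrow> nat \<Rightarrow> 'k::field) \<Rightarrow> nat set \<Rightarrow> nat set \<Rightarrow> 'k" where
  "qcoef q S T = (\<Prod>s\<in>S. \<Prod>t\<in>T. if t < s then - q s t else 1)"

definition lmul :: "(nat \<Rightarrow> nat \<Rightarrow> 'k::field) \<Rightarrow> nat \<Rightarrow> 'k lam \<Rightarrow> 'k lam \<Rightarrow> 'k lam" where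
  "lmul q n a b = (\<lambda>U. \<Sum>S\<in>Pow {1..n}. \<Sum>T\<in>Pow {1..n}.
      if S \<inter> T = {} \<and> S \<union> T = U then a S * b T * qcoef q S T else 0)"

definition tensl :: "'k::field lam list \<Rightarrow> 'k tens" where
  "tensl as = (\<lambda>ws. if length ws = length as then (\<Prod>i<length as. (as!i) (ws!i)) else 0)"

definition tbas :: "nat \<Rightarrow> nat \<Rightarrow> nat set list set" where
  "tbas n r = {ws. length ws = r \<and> set ws \<subseteq> Pow {1..n}}"

text \<open>Bar differential d : B_m = Lambda^{(x)(m+2)} -> B_(m-1), extended k-linearly from
  d(a_0 (x) ... (x) a_(m+1)) = sum_(i=0..m) (-1)^i a_0 (x) ... (x) a_i a_(i+1) (x) ... (x) a_(m+1).\<close>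
definition bar_d :: "(nat \<Rightarrow> nat \<Rightarrow> 'k::field) \<Rightarrow> nat \<Rightarrow> nat \<Rightarrow> 'k tens \<Rightarrow> 'k tens" where
  "bar_d q n m u = (\<lambda>vs. \<Sum>ws\<in>tbas n (m+2). u ws *
      (\<Sum>i\<le>m. (-1)^i * tensl (take i (map ebas ws)
          @ [lmul q n (ebas (ws!i)) (ebas (ws!(i+1)))] @ drop (i+2) (map ebas ws)) vs))"

text \<open>f_beta, by recursion on |beta| (first argument m = |beta|); beta is indexed by 1..n.\<close>
fun fb :: "(nat \<Rightarrow> nat \<Rightarrow> 'k::field) \<Rightarrow> nat \<Rightarrow> nat \<Rightarrow> (nat \<Rightarrow> nat) \<Rightarrow> 'k tens" where
  "fb q n 0 \<beta> = (\<lambda>ws. if ws = [] then 1 else 0)"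
| "fb q n (Suc m) \<beta> = (\<lambda>ws. \<Sum>l=1..n. if \<beta> l = 0 then 0 else
      (\<Prod>k\<in>{l<..n}. q l k ^ \<beta> k) *
      (if ws \<noteq> [] \<and> last ws = {l} then fb q n m (\<beta>(l := \<beta> l - 1)) (butlast ws) else 0))"

definition bsize :: "nat \<Rightarrow> (nat \<Rightarrow> nat) \<Rightarrow> nat" where
  "bsize n \<beta> = (\<Sum>i=1..n. \<beta> i)"

definition fbeta :: "(nat \<Rightarrow> nat \<Rightarrow> 'k::field) \<Rightarrow> nat \<Rightarrow> (nat \<Rightarrow> nat) \<Rightarrow> 'k tens" where
  "fbeta q n \<beta> = fb q n (bsize n \<beta>) \<beta>"

text \<open>tilde f_beta = 1 (x) f_beta (x) 1.\<close>
definition ft :: "(nat \<Rightarrow> nat \<Rightarrow> 'k::field) \<Rightarrow> nat \<Rightarrow> (nat \<Rightarrow> nat) \<Rightarrow> 'k tens" where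
  "ft q n \<beta> = (\<lambda>ws. if 2 \<le> length ws \<and> hd ws = {} \<and> last ws = {}
                     then fbeta q n \<beta> (butlast (tl ws)) else 0)"

definition fdec :: "(nat \<Rightarrow> nat \<Rightarrow> 'k::field) \<Rightarrow> nat \<Rightarrow> (nat \<Rightarrow> nat) \<Rightarrow> nat \<Rightarrow> 'k tens" where
  "fdec q n \<beta> j = (if \<beta> j = 0 then (\<lambda>_. 0) else ft q n (\<beta>(j := \<beta> j - 1)))"

definition lact :: "(nat \<Rightarrow> nat \<Rightarrow> 'k::field) \<Rightarrow> nat \<Rightarrow> 'k lam \<Rightarrow> 'k tens \<Rightarrow> 'k tens" where
  "lact q n a u = (\<lambda>ws. case ws of [] \<Rightarrow> 0
      | W # rest \<Rightarrow> (\<Sum>T\<in>Pow {1..n}. lmul q n a (ebas T) W * u (T # rest)))"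

definition ract :: "(nat \<Rightarrow> nat \<Rightarrow> 'k::field) \<Rightarrow> nat \<Rightarrow> 'k tens \<Rightarrow> 'k lam \<Rightarrow> 'k tens" where
  "ract q n u b = (\<lambda>ws. if ws = [] then 0 else
      (\<Sum>T\<in>Pow {1..n}. lmul q n (ebas T) b (last ws) * u (butlast ws @ [T])))"

text \<open>Action of an element lam = sum lam(S,T) x_S (x) x_T of Lambda_q^e.\<close>
definition envact :: "(nat \<Rightarrow> nat \<Rightarrow> 'k::field) \<Rightarrow> nat \<Rightarrow> (nat set \<Rightarrow> nat set \<Rightarrow> 'k) \<Rightarrow> 'k tens \<Rightarrow> 'k tens" where
  "envact q n lam u = (\<lambda>ws. \<Sum>S\<in>Pow {1..n}. \<Sum>T\<in>Pow {1..n}.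
      lam S T * lact q n (ebas S) (ract q n u (ebas T)) ws)"

definition multidx :: "nat \<Rightarrow> nat \<Rightarrow> (nat \<Rightarrow> nat) set" where
  "multidx n m = {\<beta>. (\<forall>i. i \<notin> {1..n} \<longrightarrow> \<beta> i = 0) \<and> bsize n \<beta> = m}"

definition Pm :: "(nat \<Rightarrow> nat \<Rightarrow> 'k::field) \<Rightarrow> nat \<Rightarrow> nat \<Rightarrow> 'k tens set" where
  "Pm q n m = {u. \<exists>c. u = (\<lambda>ws. \<Sum>\<beta>\<in>multidx n m. envact q n (c \<beta>) (ft q n \<beta>) ws)}"

end

theory Submission
  imports Defs
begin

text \<open>In the basis of words \<open>x\<^sub>S\<^sub>1 \<otimes> \<cdots> \<otimes> x\<^sub>S\<^sub>r\<close>, \<open>f\<^sub>\<beta>\<close> is the sum of the words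
  in the generators of content \<open>\<beta>\<close>, each weighted by a product of \<open>q\<close>'s over its inversions.
  Contracting two adjacent factors of \<open>f\<^sub>\<beta>\<close> gives zero: for \<open>a < b\<close> we have
  \<open>x\<^sub>b x\<^sub>a = -q\<^sub>b\<^sub>a x\<^sub>a x\<^sub>b\<close>, while the coefficients of \<open>\<dots> x\<^sub>b \<otimes> x\<^sub>a \<dots>\<close> and
  \<open>\<dots> x\<^sub>a \<otimes> x\<^sub>b \<dots>\<close> in \<open>f\<^sub>\<beta>\<close> differ by the factor \<open>q\<^sub>a\<^sub>b = q\<^sub>b\<^sub>a\<^sup>-\<^sup>1\<close>.  Hence in
  \<open>d(\<Sum>\<^sub>\<beta> c\<^sub>\<beta> f\<^sub>\<beta>)\<close>, \<open>c\<^sub>\<beta> \<in> \<Lambda>\<^sup>e\<close>, only the first and the last contraction survive.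
  They move the first, respectively last, letter \<open>x\<^sub>j\<close> of \<open>f\<^sub>\<beta>\<close> into the coefficient, and what
  is left of \<open>f\<^sub>\<beta>\<close> is \<open>f\<^sub>\<beta>\<^sub>-\<^sub>[\<^sub>j\<^sub>]\<close> times \<open>\<Prod>\<^sub>l\<^sub><\<^sub>j q\<^sub>l\<^sub>j\<^sup>\<beta>\<^sup>l\<close>, respectively
  \<open>\<Prod>\<^sub>l\<^sub>>\<^sub>j q\<^sub>j\<^sub>l\<^sup>\<beta>\<^sup>l\<close>.  Reindexing by \<open>\<beta> - [j]\<close> shows that the result lies in
  \<open>P\<^sub>m\<^sub>-\<^sub>1\<close>, and for \<open>c = 1 \<otimes> 1\<close> it is the stated formula for \<open>d f\<^sub>\<beta>\<close>.\<close>

section \<open>The closed form of \<open>f\<^sub>\<beta>\<close>\<close>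

definition is_gen :: "nat \<Rightarrow> nat set \<Rightarrow> bool" where
  "is_gen n x \<longleftrightarrow> (\<exists>l\<in>{1..n}. x = {l})"

text \<open>\<open>word_weight q n ws\<close> is the product of \<open>q j k\<close> over the inversions of \<open>ws\<close>, the pairs
  of positions where a letter \<open>{k}\<close> precedes a smaller letter \<open>{j}\<close>.  It is computed on the
  reversed word so that the recursion peels off the last letter, as that of \<^const>\<open>fb\<close> does.\<close>

fun rev_word_weight :: "(nat \<Rightarrow> nat \<Rightarrow> 'k::field) \<Rightarrow> nat \<Rightarrow> nat set list \<Rightarrow> 'k" where
  "rev_word_weight q n [] = 1"
| "rev_word_weight q n (x # xs) = (if is_gen n x
     then (\<Prod>k\<in>{the_elem x<..n}. q (the_elem x) k ^ count_list xs {k}) * rev_word_weight q n xs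
     else 0)"

definition word_weight :: "(nat \<Rightarrow> nat \<Rightarrow> 'k::field) \<Rightarrow> nat \<Rightarrow> nat set list \<Rightarrow> 'k" where
  "word_weight q n ws = rev_word_weight q n (rev ws)"

lemma word_weight_Nil [simp]: "word_weight q n [] = 1"
  by (simp add: word_weight_def)

lemma word_weight_snoc:
  "j \<in> {1..n} \<Longrightarrow>
    word_weight q n (ws @ [{j}]) = (\<Prod>k\<in>{j<..n}. q j k ^ count_list ws {k}) * word_weight q n ws"
  by (auto simp: word_weight_def is_gen_def)

lemma word_weight_snoc_not_gen: "\<not> is_gen n x \<Longrightarrow> word_weight q n (ws @ [x]) = 0"
  by (simp add: word_weight_def)

lemma is_gen_if_word_weight_nonzero:
  "word_weight q n ws \<noteq> 0 \<Longrightarrow> x \<in> set ws \<Longrightarrow> is_gen n x"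
  by (induction ws rule: rev_induct) (auto simp: word_weight_def split: if_splits)

lemma count_list_snoc_singleton:
  "count_list (ws @ [{j}]) {k} = (if k = j then Suc (count_list ws {k}) else count_list ws {k})"
  by auto

lemma count_list_Cons_singleton:
  "count_list ({j} # ws) {k} = (if k = j then Suc (count_list ws {k}) else count_list ws {k})"
  by auto

lemma prod_power_Suc_at:
  fixes f :: "'a \<Rightarrow> 'b::comm_monoid_mult"
  assumes "finite A"
  shows "(\<Prod>k\<in>A. f k ^ (if k = j then Suc (c k) else c k)) = (if j \<in> A then f j else 1) * (\<Prod>k\<in>A. f k ^ c k)"
proof -
  have "(\<Prod>k\<in>A. f k ^ (if k = j then Suc (c k) else c k)) = (\<Prod>k\<in>A. (if k = j then f k else 1) * f k ^ c k)"
    by (rule prod.cong) auto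
  then show ?thesis
    using assms by (simp add: prod.distrib)
qed

lemma word_weight_Cons:
  assumes j: "j \<in> {1..n}"
  shows "word_weight q n ({j} # ws) = (\<Prod>k\<in>{1..<j}. q k j ^ count_list ws {k}) * word_weight q n ws"
proof (induction ws rule: rev_induct)
  case Nil
  then show ?case using j by (simp add: word_weight_def is_gen_def)
next
  case (snoc x xs)
  show ?case
  proof (cases "is_gen n x")
    case False
    then show ?thesis by (metis append_Cons mult_zero_right word_weight_snoc_not_gen)
  next
    case True
    then obtain l where l: "l \<in> {1..n}" "x = {l}" by (auto simp: is_gen_def)
    have swap_range: "j \<in> {l<..n} \<longleftrightarrow> l \<in> {1..<j}" using j l by auto
    have "word_weight q n ({j} # xs @ [x])
        = (\<Prod>k\<in>{l<..n}. q l k ^ count_list ({j} # xs) {k}) * word_weight q n ({j} # xs)"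
      using word_weight_snoc[OF l(1), of q "{j} # xs"] by (simp only: l(2) append_Cons)
    also have "\<dots> = (if j \<in> {l<..n} then q l j else 1) * (\<Prod>k\<in>{l<..n}. q l k ^ count_list xs {k})
          * ((\<Prod>k\<in>{1..<j}. q k j ^ count_list xs {k}) * word_weight q n xs)"
      by (simp only: count_list_Cons_singleton prod_power_Suc_at finite_greaterThanAtMost snoc)
    also have "\<dots> = (if l \<in> {1..<j} then q l j else 1) * (\<Prod>k\<in>{1..<j}. q k j ^ count_list xs {k})
          * ((\<Prod>k\<in>{l<..n}. q l k ^ count_list xs {k}) * word_weight q n xs)"
      by (simp only: swap_range ac_simps)
    also have "\<dots> = (\<Prod>k\<in>{1..<j}. q k j ^ count_list (xs @ [x]) {k}) * word_weight q n (xs @ [x])"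
      by (simp only: l(2) count_list_snoc_singleton prod_power_Suc_at finite_atLeastLessThan
          word_weight_snoc[OF l(1)] ac_simps)
    finally show ?thesis .
  qed
qed

lemma word_weight_swap:
  assumes a: "a \<in> {1..n}" and b: "b \<in> {1..n}" and "a < b"
  shows "word_weight q n (xs @ [{b}, {a}] @ ys) = q a b * word_weight q n (xs @ [{a}, {b}] @ ys)"
proof (induction ys rule: rev_induct)
  case Nil
  have "word_weight q n (xs @ [{b}, {a}])
      = (\<Prod>k\<in>{a<..n}. q a k ^ count_list (xs @ [{b}]) {k})
        * ((\<Prod>k\<in>{b<..n}. q b k ^ count_list xs {k}) * word_weight q n xs)"
    using word_weight_snoc[OF a, of q "xs @ [{b}]"] word_weight_snoc[OF b, of q xs] by simp
  also have "\<dots> = q a b * ((\<Prod>k\<in>{b<..n}. q b k ^ count_list (xs @ [{a}]) {k})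
        * ((\<Prod>k\<in>{a<..n}. q a k ^ count_list xs {k}) * word_weight q n xs))"
    using assms by (simp only: count_list_snoc_singleton prod_power_Suc_at finite_greaterThanAtMost)
      (simp add: ac_simps)
  also have "\<dots> = q a b * word_weight q n (xs @ [{a}, {b}])"
    using word_weight_snoc[OF b, of q "xs @ [{a}]"] word_weight_snoc[OF a, of q xs] by simp
  finally show ?case by simp
next
  case (snoc y ys)
  show ?case
  proof (cases "is_gen n y")
    case False
    then show ?thesis using word_weight_snoc_not_gen[of n y] by (metis append_assoc mult_zero_right)
  next
    case True
    then obtain l where l: "l \<in> {1..n}" "y = {l}" by (auto simp: is_gen_def)
    have "count_list (xs @ [{b}, {a}] @ ys) = count_list (xs @ [{a}, {b}] @ ys)"
      by auto
    then show ?thesis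
      using word_weight_snoc[OF l(1), of q "xs @ [{b}, {a}] @ ys"]
        word_weight_snoc[OF l(1), of q "xs @ [{a}, {b}] @ ys"] snoc
      by (simp add: l(2))
  qed
qed

lemma bsize_fun_upd:
  assumes "j \<in> {1..n}"
  shows "bsize n (\<beta>(j := x)) + \<beta> j = bsize n \<beta> + x"
  using assms by (simp add: bsize_def sum.remove)

lemma le_bsize: "j \<in> {1..n} \<Longrightarrow> \<beta> j \<le> bsize n \<beta>"
  unfolding bsize_def by (rule member_le_sum) auto

lemma bsize_eq_0_iff: "bsize n \<beta> = 0 \<longleftrightarrow> (\<forall>k\<in>{1..n}. \<beta> k = 0)"
  by (simp add: bsize_def)

lemma fbeta_Nil: "fbeta q n \<beta> [] = (if \<forall>k\<in>{1..n}. \<beta> k = 0 then 1 else 0)"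
  unfolding bsize_eq_0_iff[symmetric]
  by (cases "bsize n \<beta>") (auto simp: fbeta_def intro!: sum.neutral)

lemma fbeta_snoc_not_gen: "\<not> is_gen n x \<Longrightarrow> fbeta q n \<beta> (ws @ [x]) = 0"
  by (cases "bsize n \<beta>") (auto simp: fbeta_def is_gen_def intro!: sum.neutral)

lemma fbeta_snoc:
  assumes j: "j \<in> {1..n}"
  shows "fbeta q n \<beta> (ws @ [{j}]) = (if \<beta> j = 0 then 0
           else (\<Prod>k\<in>{j<..n}. q j k ^ \<beta> k) * fbeta q n (\<beta>(j := \<beta> j - 1)) ws)"
proof (cases "bsize n \<beta>")
  case 0
  then show ?thesis using le_bsize[OF j, of \<beta>] by (simp add: fbeta_def)
next
  case (Suc m)
  have "fbeta q n \<beta> (ws @ [{j}]) = (\<Sum>l=1..n. if l = j then (if \<beta> j = 0 then 0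
           else (\<Prod>k\<in>{j<..n}. q j k ^ \<beta> k) * fb q n m (\<beta>(j := \<beta> j - 1)) ws) else 0)"
    unfolding fbeta_def Suc fb.simps by (intro sum.cong) auto
  moreover have "\<beta> j \<noteq> 0 \<Longrightarrow> bsize n (\<beta>(j := \<beta> j - 1)) = m"
    using bsize_fun_upd[OF j, of \<beta> "\<beta> j - 1"] Suc by simp
  ultimately show ?thesis using j by (simp add: fbeta_def)
qed

lemma count_list_snoc_eq_iff:
  assumes "j \<in> {1..n}"
  shows "(\<forall>k\<in>{1..n}. count_list (ws @ [{j}]) {k} = \<beta> k)
    \<longleftrightarrow> \<beta> j \<noteq> 0 \<and> (\<forall>k\<in>{1..n}. count_list ws {k} = (\<beta>(j := \<beta> j - 1)) k)"
  using assms by (auto simp del: count_list_append simp add: count_list_snoc_singleton)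

lemma fbeta_eq:
  "fbeta q n \<beta> ws = (if \<forall>k\<in>{1..n}. count_list ws {k} = \<beta> k then word_weight q n ws else 0)"
proof (induction ws arbitrary: \<beta> rule: rev_induct)
  case Nil
  then show ?case by (auto simp: fbeta_Nil)
next
  case (snoc x ws)
  show ?case
  proof (cases "is_gen n x")
    case False
    then show ?thesis by (simp add: fbeta_snoc_not_gen word_weight_snoc_not_gen)
  next
    case True
    then obtain j where j: "j \<in> {1..n}" "x = {j}" by (auto simp: is_gen_def)
    show ?thesis
      unfolding j(2) fbeta_snoc[OF j(1)] snoc count_list_snoc_eq_iff[OF j(1)] word_weight_snoc[OF j(1)]
      by simp
  qed
qed

lemma fbeta_eq_0_if_not_gen: "x \<in> set ws \<Longrightarrow> \<not> is_gen n x \<Longrightarrow> fbeta q n \<beta> ws = 0"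
  using is_gen_if_word_weight_nonzero by (fastforce simp: fbeta_eq)

lemma length_eq_bsize_if_fbeta_nonzero:
  assumes "fbeta q n \<beta> ws \<noteq> 0"
  shows "length ws = bsize n \<beta>"
proof -
  have "set ws \<subseteq> (\<lambda>l. {l}) ` {1..n}"
    using fbeta_eq_0_if_not_gen assms by (force simp: is_gen_def)
  then have "length ws = (\<Sum>x\<in>(\<lambda>l. {l}) ` {1..n}. count_list ws x)"
    by (simp add: sum_count_set)
  also have "\<dots> = (\<Sum>l=1..n. count_list ws {l})"
    by (simp add: sum.reindex)
  also have "\<dots> = bsize n \<beta>"
    using assms by (simp add: fbeta_eq bsize_def split: if_splits)
  finally show ?thesis .
qed

lemma fbeta_swap:
  assumes "a \<in> {1..n}" "b \<in> {1..n}" "a < b"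
  shows "fbeta q n \<beta> (xs @ [{b}, {a}] @ ys) = q a b * fbeta q n \<beta> (xs @ [{a}, {b}] @ ys)"
proof -
  have "count_list (xs @ [{b}, {a}] @ ys) = count_list (xs @ [{a}, {b}] @ ys)"
    by auto
  then show ?thesis
    unfolding fbeta_eq word_weight_swap[OF assms] by simp
qed

lemma fbeta_Cons:
  assumes j: "j \<in> {1..n}"
  shows "fbeta q n \<beta> ({j} # ws) = (if \<beta> j = 0 then 0
           else (\<Prod>k\<in>{1..<j}. q k j ^ \<beta> k) * fbeta q n (\<beta>(j := \<beta> j - 1)) ws)"
proof -
  have "count_list ({j} # ws) = count_list (ws @ [{j}])"
    by auto
  then show ?thesis
    unfolding fbeta_eq[of q n \<beta>] fbeta_eq[of q n "\<beta>(j := \<beta> j - 1)"] word_weight_Cons[OF j]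
    using count_list_snoc_eq_iff[OF j, of ws \<beta>] j by auto
qed

section \<open>The bar differential on basis tensors\<close>

lemma lmul_ebas:
  "lmul q n (ebas A) (ebas B) U =
    (if A \<subseteq> {1..n} \<and> B \<subseteq> {1..n} \<and> A \<inter> B = {} \<and> A \<union> B = U then qcoef q A B else 0)"
proof -
  have summand: "(if S \<inter> T = {} \<and> S \<union> T = U then ebas A S * ebas B T * qcoef q S T else 0) =
      (if S = A then (if T = B then (if A \<inter> B = {} \<and> A \<union> B = U then qcoef q A B else 0) else 0) else 0)"
    for S T
    by (simp add: ebas_def)
  have "lmul q n (ebas A) (ebas B) U = (\<Sum>S\<in>Pow {1..n}. \<Sum>T\<in>Pow {1..n}. if S = A then (if T = B
      then (if A \<inter> B = {} \<and> A \<union> B = U then qcoef q A B else 0) else 0) else 0)"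
    unfolding lmul_def summand ..
  also have "\<dots> = (\<Sum>S\<in>Pow {1..n}. if S = A then (\<Sum>T\<in>Pow {1..n}. if T = B
      then (if A \<inter> B = {} \<and> A \<union> B = U then qcoef q A B else 0) else 0) else 0)"
    by (intro sum.cong refl) simp
  finally show ?thesis by simp
qed

lemma mem_Pow_if_lmul_ebas_nonzero: "lmul q n (ebas A) (ebas B) U \<noteq> 0 \<Longrightarrow> U \<in> Pow {1..n}"
  unfolding lmul_ebas by (metis Pow_iff Un_subset_iff)

lemma lmul_ebas_empty:
  "lmul q n (ebas {}) (ebas T) U = (if T \<subseteq> {1..n} \<and> T = U then 1 else 0)"
  "lmul q n (ebas S) (ebas {}) U = (if S \<subseteq> {1..n} \<and> S = U then 1 else 0)"
  by (auto simp: lmul_ebas qcoef_def)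

lemma lmul_ebas_singletons:
  assumes "a \<in> {1..n}" "b \<in> {1..n}"
  shows "lmul q n (ebas {a}) (ebas {b}) U = (if a \<noteq> b \<and> U = {a, b} then (if b < a then - q a b else 1) else 0)"
  using assms by (auto simp: lmul_ebas qcoef_def)

lemma tensl_Cons: "tensl (a # as) vs = (case vs of [] \<Rightarrow> 0 | v # vs' \<Rightarrow> a v * tensl as vs')"
  by (cases vs) (simp_all add: tensl_def prod.lessThan_Suc_shift del: prod.lessThan_Suc)

lemma tensl_ebas_append:
  "tensl (map ebas ws @ as) vs =
    (if take (length ws) vs = ws then tensl as (drop (length ws) vs) else 0)"
proof (induction ws arbitrary: vs)
  case Nil
  then show ?case by simp
next
  case (Cons w ws)
  then show ?case by (cases vs) (auto simp: tensl_Cons ebas_def)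
qed

lemma tensl_ebas: "tensl (map ebas ws) vs = (if vs = ws then 1 else 0)"
  by (induction ws arbitrary: vs) (simp add: tensl_def, auto simp: tensl_Cons ebas_def split: list.split)

lemma tensl_contract:
  assumes "i + 2 \<le> length ws"
  shows "tensl (take i (map ebas ws) @ a # drop (i + 2) (map ebas ws)) vs =
    (if length vs + 1 = length ws \<and> take i vs = take i ws \<and> drop (i + 1) vs = drop (i + 2) ws
     then a (vs ! i) else 0)"
proof -
  have "take i (map ebas ws) @ a # drop (i + 2) (map ebas ws)
      = map ebas (take i ws) @ a # map ebas (drop (i + 2) ws)"
    by (simp add: take_map drop_map)
  then have split: "tensl (take i (map ebas ws) @ a # drop (i + 2) (map ebas ws)) vs =
      (if take i vs = take i ws then tensl (a # map ebas (drop (i + 2) ws)) (drop i vs) else 0)"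
    using assms by (simp add: tensl_ebas_append)
  show ?thesis
  proof (cases "i < length vs")
    case True
    then have "drop i vs = vs ! i # drop (i + 1) vs"
      by (simp add: Cons_nth_drop_Suc)
    moreover have "length vs + 1 = length ws" if "drop (i + 1) vs = drop (i + 2) ws"
      using arg_cong[where f = length, OF that] True assms by simp
    ultimately show ?thesis
      unfolding split by (auto simp: tensl_Cons tensl_ebas)
  next
    case False
    then show ?thesis
      unfolding split using assms by (auto simp: tensl_Cons dest: arg_cong[where f = length])
  qed
qed

lemma finite_tbas: "finite (tbas n r)"
  using finite_lists_length_eq[of "Pow {1..n}" r] by (simp add: tbas_def conj_commute)

lemma bij_betw_splice:
  assumes "i < length vs" "set vs \<subseteq> Pow {1..n}"
  shows "bij_betw (\<lambda>(A, B). take i vs @ [A, B] @ drop (i + 1) vs) (Pow {1..n} \<times> Pow {1..n})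
    {ws \<in> tbas n (length vs + 1). take i ws = take i vs \<and> drop (i + 2) ws = drop (i + 1) vs}"
    (is "bij_betw ?splice _ ?S")
proof (rule bij_betw_byWitness[where f' = "\<lambda>ws. (ws ! i, ws ! (i + 1))"])
  show "\<forall>ws\<in>?S. ?splice (ws ! i, ws ! (i + 1)) = ws"
  proof
    fix ws
    assume ws: "ws \<in> ?S"
    then have "?splice (ws ! i, ws ! (i + 1)) = take i ws @ [ws ! i, ws ! (i + 1)] @ drop (i + 2) ws"
      by simp
    also have "\<dots> = ws"
    proof -
      have "i + 2 \<le> length ws"
        using ws assms(1) by (simp add: tbas_def)
      then have "[ws ! i, ws ! (i + 1)] @ drop (i + 2) ws = drop i ws"
        by (simp add: Cons_nth_drop_Suc)
      then show ?thesis
        by simp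
    qed
    finally show "?splice (ws ! i, ws ! (i + 1)) = ws" .
  qed
  show "(\<lambda>ws. (ws ! i, ws ! (i + 1))) ` ?S \<subseteq> Pow {1..n} \<times> Pow {1..n}"
  proof (rule image_subsetI)
    fix ws
    assume ws: "ws \<in> ?S"
    then have "set ws \<subseteq> Pow {1..n}" "ws ! i \<in> set ws" "ws ! (i + 1) \<in> set ws"
      using assms(1) by (simp_all add: tbas_def)
    then show "(ws ! i, ws ! (i + 1)) \<in> Pow {1..n} \<times> Pow {1..n}"
      by (meson SigmaI subsetD)
  qed
  show "?splice ` (Pow {1..n} \<times> Pow {1..n}) \<subseteq> ?S"
  proof (rule image_subsetI)
    fix p
    assume "p \<in> Pow {1..n} \<times> Pow {1..n}"
    then obtain A B where "A \<in> Pow {1..n}" "B \<in> Pow {1..n}" and p: "p = (A, B)"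
      by (rule SigmaE)
    moreover have "set (take i vs @ [A, B] @ drop (i + 1) vs) = set (take i vs) \<union> {A, B} \<union> set (drop (i + 1) vs)"
      by simp
    ultimately have "set (take i vs @ [A, B] @ drop (i + 1) vs) \<subseteq> Pow {1..n}"
      using assms(2) set_take_subset[of i vs] set_drop_subset[of "i + 1" vs] by blast
    then show "?splice p \<in> ?S"
      using assms(1) by (simp add: tbas_def p)
  qed
qed (use assms(1) in \<open>auto simp: nth_append\<close>)

lemma set_subset_Pow_if_contraction_nonzero:
  assumes "i < length vs" "ws \<in> tbas n (length vs + 1)"
    and "take i ws = take i vs" "drop (i + 2) ws = drop (i + 1) vs"
    and "lmul q n (ebas (ws ! i)) (ebas (ws ! (i + 1))) (vs ! i) \<noteq> 0"
  shows "set vs \<subseteq> Pow {1..n}"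
proof -
  have "vs = take i ws @ [vs ! i] @ drop (i + 2) ws"
    using assms(1,3,4) id_take_nth_drop[of i vs] by simp
  from arg_cong[where f = set, OF this]
  have "set vs = set (take i ws) \<union> {vs ! i} \<union> set (drop (i + 2) ws)"
    by simp
  moreover have "vs ! i \<in> Pow {1..n}"
    using assms(5) mem_Pow_if_lmul_ebas_nonzero by blast
  moreover have "set ws \<subseteq> Pow {1..n}"
    using assms(2) by (simp add: tbas_def)
  ultimately show ?thesis
    using set_take_subset[of i ws] set_drop_subset[of "i + 2" ws] by blast
qed

lemma sum_tbas_tensl_contraction:
  assumes i: "i \<le> m"
  shows "(\<Sum>ws\<in>tbas n (m + 2). u ws * tensl (take i (map ebas ws)
        @ lmul q n (ebas (ws ! i)) (ebas (ws ! (i + 1))) # drop (i + 2) (map ebas ws)) vs)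
    = (if length vs = m + 1 \<and> set vs \<subseteq> Pow {1..n} then (\<Sum>A\<in>Pow {1..n}. \<Sum>B\<in>Pow {1..n}.
        lmul q n (ebas A) (ebas B) (vs ! i) * u (take i vs @ [A, B] @ drop (i + 1) vs)) else 0)"
proof -
  let ?contract = "\<lambda>ws. lmul q n (ebas (ws ! i)) (ebas (ws ! (i + 1)))"
  let ?S = "{ws \<in> tbas n (m + 2). take i ws = take i vs \<and> drop (i + 2) ws = drop (i + 1) vs}"
  let ?C = "length vs = m + 1 \<and> set vs \<subseteq> Pow {1..n}"
  have "(\<Sum>ws\<in>tbas n (m + 2). u ws * tensl (take i (map ebas ws) @ ?contract ws
        # drop (i + 2) (map ebas ws)) vs)
      = (\<Sum>ws\<in>tbas n (m + 2). if length vs = m + 1 \<and> ws \<in> ?S then u ws * ?contract ws (vs ! i) else 0)"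
  proof (rule sum.cong[OF refl])
    fix ws
    assume "ws \<in> tbas n (m + 2)"
    then show "u ws * tensl (take i (map ebas ws) @ ?contract ws # drop (i + 2) (map ebas ws)) vs
        = (if length vs = m + 1 \<and> ws \<in> ?S then u ws * ?contract ws (vs ! i) else 0)"
      using i tensl_contract[of i ws "?contract ws" vs] by (auto simp: tbas_def)
  qed
  also have "\<dots> = (if ?C then (\<Sum>ws\<in>?S. u ws * ?contract ws (vs ! i)) else 0)"
  proof (cases ?C)
    case True
    then have "(\<Sum>ws\<in>tbas n (m + 2). if length vs = m + 1 \<and> ws \<in> ?S then u ws * ?contract ws (vs ! i) else 0)
        = (\<Sum>ws\<in>tbas n (m + 2) \<inter> ?S. u ws * ?contract ws (vs ! i))"
      by (simp only: simp_thms sum.inter_restrict[OF finite_tbas])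
    also have "tbas n (m + 2) \<inter> ?S = ?S"
      by blast
    finally show ?thesis
      using True by (simp only: simp_thms if_True)
  next
    case False
    then have "?contract ws (vs ! i) = 0" if "length vs = m + 1" "ws \<in> ?S" for ws
      using that i set_subset_Pow_if_contraction_nonzero[of i vs ws n q] by auto
    then have "(\<Sum>ws\<in>tbas n (m + 2). if length vs = m + 1 \<and> ws \<in> ?S then u ws * ?contract ws (vs ! i) else 0) = 0"
      by (intro sum.neutral ballI) simp
    then show ?thesis
      unfolding if_not_P[OF False] .
  qed
  also have "\<dots> = (if ?C then (\<Sum>A\<in>Pow {1..n}. \<Sum>B\<in>Pow {1..n}.
      lmul q n (ebas A) (ebas B) (vs ! i) * u (take i vs @ [A, B] @ drop (i + 1) vs)) else 0)"
  proof (cases ?C)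
    case True
    let ?splice = "\<lambda>(A, B). take i vs @ [A, B] @ drop (i + 1) vs"
    have "bij_betw ?splice (Pow {1..n} \<times> Pow {1..n}) ?S"
      using bij_betw_splice[of i vs n] True i by simp
    then have "(\<Sum>ws\<in>?S. u ws * ?contract ws (vs ! i))
        = (\<Sum>p\<in>Pow {1..n} \<times> Pow {1..n}. u (?splice p) * ?contract (?splice p) (vs ! i))"
      by (rule sum.reindex_bij_betw[symmetric])
    also have "\<dots> = (\<Sum>(A, B)\<in>Pow {1..n} \<times> Pow {1..n}.
        lmul q n (ebas A) (ebas B) (vs ! i) * u (take i vs @ [A, B] @ drop (i + 1) vs))"
      using True i by (intro sum.cong refl) (simp add: nth_append mult.commute split: prod.split)
    finally show ?thesis
      using True by (simp only: if_True simp_thms sum.cartesian_product)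
  qed (simp only: if_False)
  finally show ?thesis .
qed

lemma bar_d_apply:
  "bar_d q n m u vs = (if length vs = m + 1 \<and> set vs \<subseteq> Pow {1..n} then
     (\<Sum>i\<le>m. (-1) ^ i * (\<Sum>A\<in>Pow {1..n}. \<Sum>B\<in>Pow {1..n}.
        lmul q n (ebas A) (ebas B) (vs ! i) * u (take i vs @ [A, B] @ drop (i + 1) vs)))
     else 0)"
    (is "_ = (if ?C then (\<Sum>i\<le>m. (-1) ^ i * ?T i) else 0)")
proof -
  have "bar_d q n m u vs = (\<Sum>i\<le>m. (-1) ^ i * (\<Sum>ws\<in>tbas n (m + 2). u ws * tensl (take i (map ebas ws)
      @ lmul q n (ebas (ws ! i)) (ebas (ws ! (i + 1))) # drop (i + 2) (map ebas ws)) vs))"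
    unfolding bar_d_def sum_distrib_left
    by (subst sum.swap) (simp only: ac_simps append_Cons append_Nil)
  also have "\<dots> = (\<Sum>i\<le>m. (-1) ^ i * (if ?C then ?T i else 0))"
    by (rule sum.cong[OF refl]) (simp only: sum_tbas_tensl_contraction atMost_iff)
  finally show ?thesis
    by (cases ?C) (simp_all only: simp_thms if_True if_False mult_zero_right sum.neutral_const)
qed

section \<open>Inner contractions of \<open>f\<^sub>\<beta>\<close> vanish\<close>

lemma sum_sum_antisym_eq_0:
  fixes F :: "'a \<Rightarrow> 'a \<Rightarrow> 'b::ab_group_add"
  assumes "finite A"
    and "\<And>a. a \<in> A \<Longrightarrow> F a a = 0"
    and "\<And>a b. a \<in> A \<Longrightarrow> b \<in> A \<Longrightarrow> F b a = - F a b"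
  shows "(\<Sum>a\<in>A. \<Sum>b\<in>A. F a b) = 0"
  using assms
proof (induction A rule: finite_induct)
  case empty
  show ?case by simp
next
  case (insert x A)
  note diag = insert.prems(1) and antisym = insert.prems(2)
  have "(\<Sum>a\<in>A. F a x) = (\<Sum>a\<in>A. - F x a)"
    using antisym[of x] by (intro sum.cong) simp_all
  also have "\<dots> = - (\<Sum>b\<in>A. F x b)"
    by (rule sum_negf)
  moreover have "(\<Sum>a\<in>A. \<Sum>b\<in>A. F a b) = 0"
  proof (rule insert.IH)
    show "F a a = 0" if "a \<in> A" for a
      using diag that by simp
    show "F b a = - F a b" if "a \<in> A" "b \<in> A" for a b
      by (rule antisym) (use that in simp_all)
  qed
  moreover have "F x x = 0"
    using diag by simp
  ultimately show ?case
    using insert.hyps by (simp add: sum.distrib)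
qed

lemma sum_Pow_eq_sum_singletons:
  assumes "finite S" and "\<And>B. B \<subseteq> S \<Longrightarrow> \<forall>j\<in>S. B \<noteq> {j} \<Longrightarrow> G B = 0"
  shows "(\<Sum>B\<in>Pow S. G B) = (\<Sum>j\<in>S. G {j})"
proof -
  have "(\<Sum>j\<in>S. G {j}) = (\<Sum>B\<in>(\<lambda>j. {j}) ` S. G B)"
    by (simp add: sum.reindex)
  also have "\<dots> = (\<Sum>B\<in>Pow S. G B)"
    using assms by (intro sum.mono_neutral_left) auto
  finally show ?thesis ..
qed

lemma lmul_fbeta_swap:
  assumes q_inv: "q a b * q b a = 1" and ab: "a \<in> {1..n}" "b \<in> {1..n}" "a < b"
  shows "lmul q n (ebas {b}) (ebas {a}) U * fbeta q n \<beta> (xs @ [{b}, {a}] @ ys)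
    = - (lmul q n (ebas {a}) (ebas {b}) U * fbeta q n \<beta> (xs @ [{a}, {b}] @ ys))"
proof -
  have "lmul q n (ebas {b}) (ebas {a}) U * q a b = - lmul q n (ebas {a}) (ebas {b}) U"
    using ab q_inv by (simp add: lmul_ebas_singletons insert_commute mult.commute)
  then show ?thesis
    unfolding fbeta_swap[OF ab] by (simp add: mult.assoc[symmetric])
qed

lemma sum_Pow_Pow_fbeta_eq_sum_gens:
  "(\<Sum>A\<in>Pow {1..n}. \<Sum>B\<in>Pow {1..n}. g A B * fbeta q n \<beta> (xs @ [A, B] @ ys))
    = (\<Sum>a=1..n. \<Sum>b=1..n. g {a} {b} * fbeta q n \<beta> (xs @ [{a}, {b}] @ ys))"
proof -
  have not_gen: "fbeta q n \<beta> (xs @ [A, B] @ ys) = 0"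
    if "(\<forall>j\<in>{1..n}. A \<noteq> {j}) \<or> (\<forall>j\<in>{1..n}. B \<noteq> {j})" for A B
    using that by (auto intro: fbeta_eq_0_if_not_gen simp: is_gen_def)
  have "(\<Sum>B\<in>Pow {1..n}. g A B * fbeta q n \<beta> (xs @ [A, B] @ ys))
      = (\<Sum>b=1..n. g A {b} * fbeta q n \<beta> (xs @ [A, {b}] @ ys))" for A
    using not_gen by (intro sum_Pow_eq_sum_singletons) simp_all
  moreover have "(\<Sum>A\<in>Pow {1..n}. \<Sum>b=1..n. g A {b} * fbeta q n \<beta> (xs @ [A, {b}] @ ys))
      = (\<Sum>a=1..n. \<Sum>b=1..n. g {a} {b} * fbeta q n \<beta> (xs @ [{a}, {b}] @ ys))"
    using not_gen by (intro sum_Pow_eq_sum_singletons) (simp_all add: sum.neutral)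
  ultimately show ?thesis
    by simp
qed

lemma fbeta_contraction_eq_0:
  assumes q_inv: "\<And>a b. a \<in> {1..n} \<Longrightarrow> b \<in> {1..n} \<Longrightarrow> q a b * q b a = 1"
  shows "(\<Sum>A\<in>Pow {1..n}. \<Sum>B\<in>Pow {1..n}.
      lmul q n (ebas A) (ebas B) U * fbeta q n \<beta> (xs @ [A, B] @ ys)) = 0"
proof -
  define F where "F a b = lmul q n (ebas {a}) (ebas {b}) U * fbeta q n \<beta> (xs @ [{a}, {b}] @ ys)" for a b
  have diag: "F a a = 0" if "a \<in> {1..n}" for a
    using that by (simp add: F_def lmul_ebas_singletons)
  have "(\<Sum>a=1..n. \<Sum>b=1..n. F a b) = 0"
  proof (rule sum_sum_antisym_eq_0)
    show "F b a = - F a b" if "a \<in> {1..n}" "b \<in> {1..n}" for a b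
    proof (cases a b rule: linorder_cases)
      case less
      then show ?thesis
        unfolding F_def using lmul_fbeta_swap[OF q_inv[OF that] that less] that by simp
    next
      case equal
      then show ?thesis
        using diag[OF that(1)] by simp
    next
      case greater
      then show ?thesis
        unfolding F_def using lmul_fbeta_swap[OF q_inv[OF that(2,1)] that(2,1) greater] that by simp
    qed
  qed (simp_all add: diag)
  then show ?thesis
    unfolding sum_Pow_Pow_fbeta_eq_sum_gens F_def .
qed

lemma Cons_snoc_cases:
  assumes "2 \<le> length vs"
  obtains W X V where "vs = W # X @ [V]"
proof -
  obtain W r where r: "vs = W # r"
    using assms by (cases vs) auto
  moreover have "r \<noteq> []"
    using assms r by auto
  ultimately have "r = butlast r @ [last r]"
    by simp
  then show ?thesis
    using that r by metis
qed

lemma ft_Cons_snoc: "ft q n \<beta> (W # X @ [V]) = (if W = {} \<and> V = {} then fbeta q n \<beta> X else 0)"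
  by (simp add: ft_def)

lemma ft_eq_0_if_short: "length ws < 2 \<Longrightarrow> ft q n \<beta> ws = 0"
  by (simp add: ft_def)

lemma lact_Cons: "lact q n a u (W # ws) = (\<Sum>T\<in>Pow {1..n}. lmul q n a (ebas T) W * u (T # ws))"
  by (simp add: lact_def)

lemma ract_snoc: "ract q n u b (ws @ [V]) = (\<Sum>T\<in>Pow {1..n}. lmul q n (ebas T) b V * u (ws @ [T]))"
  by (simp add: ract_def)

lemma lact_eq_0_if_short:
  assumes "\<And>ws. length ws < 2 \<Longrightarrow> u ws = 0" and "length ws < 2"
  shows "lact q n a u ws = 0"
  using assms by (cases ws) (simp_all add: lact_def)

lemma ract_eq_0_if_short:
  assumes "\<And>ws. length ws < 2 \<Longrightarrow> u ws = 0" and "length ws < 2"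
  shows "ract q n u b ws = 0"
  using assms by (cases ws rule: rev_cases) (simp_all add: ract_def)

lemma sum_Pow_if_empty: "(\<Sum>T\<in>Pow {1..n::nat}. if T = {} then g T else 0) = g {}"
  by (rule trans[OF sum.delta]) auto

lemma lact_ft_Cons_snoc:
  "lact q n (ebas S) (ft q n \<beta>) (W # X @ [V]) =
    (if V = {} \<and> S \<subseteq> {1..n} \<and> S = W then fbeta q n \<beta> X else 0)"
proof -
  have "lact q n (ebas S) (ft q n \<beta>) (W # X @ [V]) = (\<Sum>T\<in>Pow {1..n}.
      if T = {} then lmul q n (ebas S) (ebas {}) W * (if V = {} then fbeta q n \<beta> X else 0) else 0)"
    unfolding lact_Cons by (intro sum.cong refl) (simp add: ft_Cons_snoc)
  then show ?thesis
    by (auto simp: sum_Pow_if_empty lmul_ebas_empty)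
qed

lemma ract_ft_Cons_snoc:
  "ract q n (ft q n \<beta>) (ebas T) (W # X @ [V]) =
    (if W = {} \<and> T \<subseteq> {1..n} \<and> T = V then fbeta q n \<beta> X else 0)"
proof -
  have "ract q n (ft q n \<beta>) (ebas T) ((W # X) @ [V]) = (\<Sum>T'\<in>Pow {1..n}.
      if T' = {} then lmul q n (ebas {}) (ebas T) V * (if W = {} then fbeta q n \<beta> X else 0) else 0)"
    unfolding ract_snoc by (intro sum.cong refl) (simp add: ft_Cons_snoc)
  then show ?thesis
    by (auto simp: sum_Pow_if_empty lmul_ebas_empty)
qed

lemma lact_ract_ft:
  "lact q n (ebas S) (ract q n (ft q n \<beta>) (ebas T)) (W # X @ [V]) =
    (if S \<subseteq> {1..n} \<and> S = W \<and> T \<subseteq> {1..n} \<and> T = V then fbeta q n \<beta> X else 0)"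
proof -
  have "lact q n (ebas S) (ract q n (ft q n \<beta>) (ebas T)) (W # X @ [V]) = (\<Sum>W'\<in>Pow {1..n}.
      if W' = {} then lmul q n (ebas S) (ebas {}) W * (if T \<subseteq> {1..n} \<and> T = V then fbeta q n \<beta> X else 0) else 0)"
    unfolding lact_Cons by (intro sum.cong refl) (simp add: ract_ft_Cons_snoc)
  then show ?thesis
    by (auto simp: sum_Pow_if_empty lmul_ebas_empty)
qed

lemma envact_ft:
  "envact q n lam (ft q n \<beta>) ws = (if 2 \<le> length ws \<and> hd ws \<in> Pow {1..n} \<and> last ws \<in> Pow {1..n}
     then lam (hd ws) (last ws) * fbeta q n \<beta> (butlast (tl ws)) else 0)"
proof (cases "2 \<le> length ws")
  case False
  have "lact q n a (ract q n (ft q n \<beta>) b) ws = 0" for a b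
    using False by (intro lact_eq_0_if_short ract_eq_0_if_short ft_eq_0_if_short) simp_all
  then show ?thesis
    using False by (simp add: envact_def)
next
  case True
  then obtain W X V where ws: "ws = W # X @ [V]"
    by (rule Cons_snoc_cases)
  define C where "C = lam W V * fbeta q n \<beta> X"
  have "envact q n lam (ft q n \<beta>) ws
      = (\<Sum>S\<in>Pow {1..n}. \<Sum>T\<in>Pow {1..n}. if S = W then (if T = V then C else 0) else 0)"
    unfolding envact_def ws lact_ract_ft C_def by (intro sum.cong refl) auto
  also have "\<dots> = (\<Sum>S\<in>Pow {1..n}. if S = W then (\<Sum>T\<in>Pow {1..n}. if T = V then C else 0) else 0)"
    by (intro sum.cong refl) simp
  also have "\<dots> = (if W \<in> Pow {1..n} then (if V \<in> Pow {1..n} then C else 0) else 0)"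
    by (simp only: sum.delta finite_Pow_iff finite_atLeastAtMost)
  finally show ?thesis
    by (simp add: ws C_def)
qed

text \<open>The element \<open>\<Sum>\<^sub>\<beta> c\<^sub>\<beta> f\<^sub>\<beta>\<close> of \<open>P\<^sub>m\<close>, where \<open>c \<beta> A B\<close> is the coordinate of
  \<open>c\<^sub>\<beta> \<in> \<Lambda>\<^sup>e\<close> at \<open>x\<^sub>A \<otimes> x\<^sub>B\<close>.\<close>

definition pm_comb ::
    "(nat \<Rightarrow> nat \<Rightarrow> 'k::field) \<Rightarrow> nat \<Rightarrow> ((nat \<Rightarrow> nat) \<Rightarrow> nat set \<Rightarrow> nat set \<Rightarrow> 'k) \<Rightarrow> nat \<Rightarrow> 'k tens" where
  "pm_comb q n c m = (\<lambda>ws. if 2 \<le> length ws \<and> hd ws \<in> Pow {1..n} \<and> last ws \<in> Pow {1..n}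
     then (\<Sum>\<beta>\<in>multidx n m. c \<beta> (hd ws) (last ws) * fbeta q n \<beta> (butlast (tl ws))) else 0)"

lemma pm_comb_Cons_snoc:
  "W \<in> Pow {1..n} \<Longrightarrow> V \<in> Pow {1..n} \<Longrightarrow>
    pm_comb q n c m (W # X @ [V]) = (\<Sum>\<beta>\<in>multidx n m. c \<beta> W V * fbeta q n \<beta> X)"
  by (simp add: pm_comb_def)

lemma Pm_eq_range_pm_comb: "Pm q n m = range (\<lambda>c. pm_comb q n c m)"
proof -
  have "(\<lambda>ws. \<Sum>\<beta>\<in>multidx n m. envact q n (c \<beta>) (ft q n \<beta>) ws) = pm_comb q n c m" for c
  proof (rule ext)
    fix ws
    show "(\<Sum>\<beta>\<in>multidx n m. envact q n (c \<beta>) (ft q n \<beta>) ws) = pm_comb q n c m ws"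
      by (cases "2 \<le> length ws \<and> hd ws \<in> Pow {1..n} \<and> last ws \<in> Pow {1..n}")
        (simp_all only: envact_ft pm_comb_def simp_thms if_True if_False sum.neutral_const)
  qed
  then show ?thesis
    by (auto simp: Pm_def)
qed

section \<open>The differential on \<open>P\<^sub>m\<close>\<close>

text \<open>Coordinates at \<open>(W, V)\<close> of \<open>c\<^sub>\<beta> (x\<^sub>j \<otimes> 1)\<close> and \<open>c\<^sub>\<beta> (1 \<otimes> x\<^sub>j)\<close>.\<close>

definition left_mult_coeff :: "(nat \<Rightarrow> nat \<Rightarrow> 'k::field) \<Rightarrow> nat \<Rightarrow>
    ((nat \<Rightarrow> nat) \<Rightarrow> nat set \<Rightarrow> nat set \<Rightarrow> 'k) \<Rightarrow> (nat \<Rightarrow> nat) \<Rightarrow> nat \<Rightarrow> nat set \<Rightarrow> nat set \<Rightarrow> 'k" where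
  "left_mult_coeff q n c \<beta> j W V = (\<Sum>A\<in>Pow {1..n}. lmul q n (ebas A) (ebas {j}) W * c \<beta> A V)"

definition right_mult_coeff :: "(nat \<Rightarrow> nat \<Rightarrow> 'k::field) \<Rightarrow> nat \<Rightarrow>
    ((nat \<Rightarrow> nat) \<Rightarrow> nat set \<Rightarrow> nat set \<Rightarrow> 'k) \<Rightarrow> (nat \<Rightarrow> nat) \<Rightarrow> nat \<Rightarrow> nat set \<Rightarrow> nat set \<Rightarrow> 'k" where
  "right_mult_coeff q n c \<beta> j W V = (\<Sum>B\<in>Pow {1..n}. lmul q n (ebas {j}) (ebas B) V * c \<beta> W B)"

definition first_contraction :: "(nat \<Rightarrow> nat \<Rightarrow> 'k::field) \<Rightarrow> nat \<Rightarrow>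
    ((nat \<Rightarrow> nat) \<Rightarrow> nat set \<Rightarrow> nat set \<Rightarrow> 'k) \<Rightarrow> nat \<Rightarrow> nat set \<Rightarrow> nat set \<Rightarrow> nat set list \<Rightarrow> 'k" where
  "first_contraction q n c m W V X = (\<Sum>\<beta>\<in>multidx n m. \<Sum>j=1..n. if \<beta> j = 0 then 0
     else (\<Prod>k\<in>{1..<j}. q k j ^ \<beta> k) * left_mult_coeff q n c \<beta> j W V * fbeta q n (\<beta>(j := \<beta> j - 1)) X)"

definition last_contraction :: "(nat \<Rightarrow> nat \<Rightarrow> 'k::field) \<Rightarrow> nat \<Rightarrow>
    ((nat \<Rightarrow> nat) \<Rightarrow> nat set \<Rightarrow> nat set \<Rightarrow> 'k) \<Rightarrow> nat \<Rightarrow> nat set \<Rightarrow> nat set \<Rightarrow> nat set list \<Rightarrow> 'k" where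
  "last_contraction q n c m W V X = (\<Sum>\<beta>\<in>multidx n m. \<Sum>j=1..n. if \<beta> j = 0 then 0
     else (\<Prod>k\<in>{j<..n}. q j k ^ \<beta> k) * right_mult_coeff q n c \<beta> j W V * fbeta q n (\<beta>(j := \<beta> j - 1)) X)"

lemma sum_swap_outer3:
  "(\<Sum>a\<in>A. \<Sum>b\<in>B. \<Sum>c\<in>C. g a b c) = (\<Sum>c\<in>C. \<Sum>a\<in>A. \<Sum>b\<in>B. g a b c)"
proof -
  have "(\<Sum>a\<in>A. \<Sum>b\<in>B. \<Sum>c\<in>C. g a b c) = (\<Sum>a\<in>A. \<Sum>c\<in>C. \<Sum>b\<in>B. g a b c)"
    by (rule sum.cong[OF refl]) (rule sum.swap)
  also have "\<dots> = (\<Sum>c\<in>C. \<Sum>a\<in>A. \<Sum>b\<in>B. g a b c)"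
    by (rule sum.swap)
  finally show ?thesis .
qed

lemma pm_comb_first_contraction:
  assumes V: "V \<in> Pow {1..n}"
  shows "(\<Sum>A\<in>Pow {1..n}. \<Sum>B\<in>Pow {1..n}. lmul q n (ebas A) (ebas B) W * pm_comb q n c m (A # (B # X) @ [V]))
     = first_contraction q n c m W V X"
proof -
  define G where "G A j \<beta> = (if \<beta> j = 0 then 0 else (\<Prod>k\<in>{1..<j}. q k j ^ \<beta> k) *
      (lmul q n (ebas A) (ebas {j}) W * c \<beta> A V) * fbeta q n (\<beta>(j := \<beta> j - 1)) X)" for A j \<beta>
  have "(\<Sum>A\<in>Pow {1..n}. \<Sum>B\<in>Pow {1..n}. lmul q n (ebas A) (ebas B) W * pm_comb q n c m (A # (B # X) @ [V]))
     = (\<Sum>A\<in>Pow {1..n}. \<Sum>B\<in>Pow {1..n}.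
          lmul q n (ebas A) (ebas B) W * (\<Sum>\<beta>\<in>multidx n m. c \<beta> A V * fbeta q n \<beta> (B # X)))"
    using pm_comb_Cons_snoc[OF _ V, of _ q c m "_ # X"] by (intro sum.cong refl) (simp only:)
  also have "\<dots> = (\<Sum>A\<in>Pow {1..n}. \<Sum>j=1..n.
          lmul q n (ebas A) (ebas {j}) W * (\<Sum>\<beta>\<in>multidx n m. c \<beta> A V * fbeta q n \<beta> ({j} # X)))"
  proof (intro sum.cong refl sum_Pow_eq_sum_singletons)
    fix A B
    assume "\<forall>j\<in>{1..n}. B \<noteq> {j}"
    then have "fbeta q n \<beta> (B # X) = 0" for \<beta>
      by (intro fbeta_eq_0_if_not_gen[of B]) (simp_all add: is_gen_def)
    then show "lmul q n (ebas A) (ebas B) W * (\<Sum>\<beta>\<in>multidx n m. c \<beta> A V * fbeta q n \<beta> (B # X)) = 0"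
      by simp
  qed simp
  also have "\<dots> = (\<Sum>A\<in>Pow {1..n}. \<Sum>j=1..n. \<Sum>\<beta>\<in>multidx n m. G A j \<beta>)"
    unfolding sum_distrib_left G_def by (intro sum.cong refl) (simp add: fbeta_Cons ac_simps)
  also have "\<dots> = (\<Sum>\<beta>\<in>multidx n m. \<Sum>A\<in>Pow {1..n}. \<Sum>j=1..n. G A j \<beta>)"
    by (rule sum_swap_outer3)
  also have "\<dots> = (\<Sum>\<beta>\<in>multidx n m. \<Sum>j=1..n. \<Sum>A\<in>Pow {1..n}. G A j \<beta>)"
    by (intro sum.cong refl) (rule sum.swap)
  also have "\<dots> = first_contraction q n c m W V X"
    unfolding first_contraction_def
  proof (intro sum.cong refl)
    fix \<beta> j
    show "(\<Sum>A\<in>Pow {1..n}. G A j \<beta>) = (if \<beta> j = 0 then 0 else (\<Prod>k\<in>{1..<j}. q k j ^ \<beta> k)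
        * left_mult_coeff q n c \<beta> j W V * fbeta q n (\<beta>(j := \<beta> j - 1)) X)"
      by (simp add: G_def left_mult_coeff_def sum_distrib_left sum_distrib_right)
  qed
  finally show ?thesis .
qed

lemma pm_comb_last_contraction:
  assumes W: "W \<in> Pow {1..n}"
  shows "(\<Sum>A\<in>Pow {1..n}. \<Sum>B\<in>Pow {1..n}. lmul q n (ebas A) (ebas B) V * pm_comb q n c m (W # (X @ [A]) @ [B]))
     = last_contraction q n c m W V X"
proof -
  define G where "G j B \<beta> = (if \<beta> j = 0 then 0 else (\<Prod>k\<in>{j<..n}. q j k ^ \<beta> k) *
      (lmul q n (ebas {j}) (ebas B) V * c \<beta> W B) * fbeta q n (\<beta>(j := \<beta> j - 1)) X)" for j B \<beta>
  have "(\<Sum>A\<in>Pow {1..n}. \<Sum>B\<in>Pow {1..n}. lmul q n (ebas A) (ebas B) V * pm_comb q n c m (W # (X @ [A]) @ [B]))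
     = (\<Sum>A\<in>Pow {1..n}. \<Sum>B\<in>Pow {1..n}.
          lmul q n (ebas A) (ebas B) V * (\<Sum>\<beta>\<in>multidx n m. c \<beta> W B * fbeta q n \<beta> (X @ [A])))"
    using pm_comb_Cons_snoc[OF W, of _ q c m "X @ [_]"] by (intro sum.cong refl) (simp only:)
  also have "\<dots> = (\<Sum>j=1..n. \<Sum>B\<in>Pow {1..n}.
          lmul q n (ebas {j}) (ebas B) V * (\<Sum>\<beta>\<in>multidx n m. c \<beta> W B * fbeta q n \<beta> (X @ [{j}])))"
  proof (intro sum_Pow_eq_sum_singletons)
    fix A
    assume "\<forall>j\<in>{1..n}. A \<noteq> {j}"
    then have "fbeta q n \<beta> (X @ [A]) = 0" for \<beta>
      by (intro fbeta_eq_0_if_not_gen[of A]) (simp_all add: is_gen_def)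
    then show "(\<Sum>B\<in>Pow {1..n}. lmul q n (ebas A) (ebas B) V
        * (\<Sum>\<beta>\<in>multidx n m. c \<beta> W B * fbeta q n \<beta> (X @ [A]))) = 0"
      by simp
  qed simp
  also have "\<dots> = (\<Sum>j=1..n. \<Sum>B\<in>Pow {1..n}. \<Sum>\<beta>\<in>multidx n m. G j B \<beta>)"
    unfolding sum_distrib_left G_def by (intro sum.cong refl) (simp add: fbeta_snoc ac_simps)
  also have "\<dots> = (\<Sum>\<beta>\<in>multidx n m. \<Sum>j=1..n. \<Sum>B\<in>Pow {1..n}. G j B \<beta>)"
    by (rule sum_swap_outer3)
  also have "\<dots> = last_contraction q n c m W V X"
    unfolding last_contraction_def
  proof (intro sum.cong refl)
    fix \<beta> j
    show "(\<Sum>B\<in>Pow {1..n}. G j B \<beta>) = (if \<beta> j = 0 then 0 else (\<Prod>k\<in>{j<..n}. q j k ^ \<beta> k)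
        * right_mult_coeff q n c \<beta> j W V * fbeta q n (\<beta>(j := \<beta> j - 1)) X)"
      by (simp add: G_def right_mult_coeff_def sum_distrib_left sum_distrib_right)
  qed
  finally show ?thesis .
qed

lemma pm_comb_inner_contraction_eq_0:
  assumes q_inv: "\<And>a b. a \<in> {1..n} \<Longrightarrow> b \<in> {1..n} \<Longrightarrow> q a b * q b a = 1"
    and W: "W \<in> Pow {1..n}" and V: "V \<in> Pow {1..n}"
  shows "(\<Sum>A\<in>Pow {1..n}. \<Sum>B\<in>Pow {1..n}.
      lmul q n (ebas A) (ebas B) U * pm_comb q n c m (W # (xs @ [A, B] @ ys) @ [V])) = 0"
proof -
  have "(\<Sum>A\<in>Pow {1..n}. \<Sum>B\<in>Pow {1..n}.
      lmul q n (ebas A) (ebas B) U * pm_comb q n c m (W # (xs @ [A, B] @ ys) @ [V]))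
    = (\<Sum>A\<in>Pow {1..n}. \<Sum>B\<in>Pow {1..n}.
        lmul q n (ebas A) (ebas B) U * (\<Sum>\<beta>\<in>multidx n m. c \<beta> W V * fbeta q n \<beta> (xs @ [A, B] @ ys)))"
    using pm_comb_Cons_snoc[OF W V, of q c m "xs @ [_, _] @ ys"] by (intro sum.cong refl) (simp only:)
  also have "\<dots> = (\<Sum>A\<in>Pow {1..n}. \<Sum>B\<in>Pow {1..n}. \<Sum>\<beta>\<in>multidx n m.
        c \<beta> W V * (lmul q n (ebas A) (ebas B) U * fbeta q n \<beta> (xs @ [A, B] @ ys)))"
    unfolding sum_distrib_left by (intro sum.cong refl) (rule mult.left_commute)
  also have "\<dots> = (\<Sum>\<beta>\<in>multidx n m. c \<beta> W V * (\<Sum>A\<in>Pow {1..n}. \<Sum>B\<in>Pow {1..n}.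
        lmul q n (ebas A) (ebas B) U * fbeta q n \<beta> (xs @ [A, B] @ ys)))"
    by (subst sum_swap_outer3) (simp only: sum_distrib_left)
  also have "\<dots> = 0"
    using fbeta_contraction_eq_0[OF q_inv] by simp
  finally show ?thesis .
qed

lemma word_if_fbeta_dec_nonzero:
  assumes "\<beta> \<in> multidx n m" "j \<in> {1..n}" "\<beta> j \<noteq> 0" "fbeta q n (\<beta>(j := \<beta> j - 1)) X \<noteq> 0"
  shows "length X = m - 1 \<and> set X \<subseteq> Pow {1..n}"
proof
  show "length X = m - 1"
    using length_eq_bsize_if_fbeta_nonzero[OF assms(4)] bsize_fun_upd[OF assms(2), of \<beta> "\<beta> j - 1"] assms(1,3)
    by (simp add: multidx_def)
  show "set X \<subseteq> Pow {1..n}"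
    using fbeta_eq_0_if_not_gen assms(4) by (fastforce simp: is_gen_def)
qed

lemma sum_fbeta_dec_eq_0_if_not_word:
  assumes "\<not> (length X = m - 1 \<and> set X \<subseteq> Pow {1..n})"
  shows "(\<Sum>\<beta>\<in>multidx n m. \<Sum>j=1..n. if \<beta> j = 0 then 0 else g \<beta> j * fbeta q n (\<beta>(j := \<beta> j - 1)) X) = 0"
proof (intro sum.neutral ballI)
  fix \<beta> j
  assume "\<beta> \<in> multidx n m" "j \<in> {1..n}"
  then show "(if \<beta> j = 0 then 0 else g \<beta> j * fbeta q n (\<beta>(j := \<beta> j - 1)) X) = 0"
    using word_if_fbeta_dec_nonzero[of \<beta> n m j q X] assms by auto
qed

lemma contractions_eq_0_if_not_word:
  assumes "\<not> (length X = m - 1 \<and> set X \<subseteq> Pow {1..n})"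
  shows "first_contraction q n c m W V X = 0" "last_contraction q n c m W V X = 0"
  unfolding first_contraction_def last_contraction_def by (rule sum_fbeta_dec_eq_0_if_not_word[OF assms])+

lemma sum_atMost_ends:
  fixes f :: "nat \<Rightarrow> 'a::comm_monoid_add"
  assumes "1 \<le> m" and "\<And>i. 0 < i \<Longrightarrow> i < m \<Longrightarrow> f i = 0"
  shows "(\<Sum>i\<le>m. f i) = f 0 + f m"
proof -
  have "(\<Sum>i\<le>m. f i) = (\<Sum>i\<in>{0, m}. f i)"
    using assms(2) by (intro sum.mono_neutral_right) auto
  then show ?thesis
    using assms(1) by simp
qed

lemma bar_d_pm_comb_Cons_snoc:
  assumes m: "1 \<le> m"
    and q_inv: "\<And>a b. a \<in> {1..n} \<Longrightarrow> b \<in> {1..n} \<Longrightarrow> q a b * q b a = 1"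
    and W: "W \<in> Pow {1..n}" and V: "V \<in> Pow {1..n}" and X: "length X = m - 1" "set X \<subseteq> Pow {1..n}"
  shows "bar_d q n m (pm_comb q n c m) (W # X @ [V])
    = first_contraction q n c m W V X + (-1) ^ m * last_contraction q n c m W V X"
proof -
  define vs where "vs = W # X @ [V]"
  define T where "T i = (\<Sum>A\<in>Pow {1..n}. \<Sum>B\<in>Pow {1..n}. lmul q n (ebas A) (ebas B) (vs ! i) *
      pm_comb q n c m (take i vs @ [A, B] @ drop (i + 1) vs))" for i
  have "length vs = m + 1 \<and> set vs \<subseteq> Pow {1..n}"
    using m W V X by (simp add: vs_def)
  then have "bar_d q n m (pm_comb q n c m) vs = (\<Sum>i\<le>m. (-1) ^ i * T i)"
    unfolding bar_d_apply T_def by simp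
  also have "\<dots> = (-1) ^ 0 * T 0 + (-1) ^ m * T m"
  proof (rule sum_atMost_ends[OF m])
    fix i
    assume i: "0 < i" "i < m"
    then obtain i' where i': "i = Suc i'"
      by (cases i) auto
    have "take i vs @ [A, B] @ drop (i + 1) vs = W # (take i' X @ [A, B] @ drop i X) @ [V]" for A B
      using i i' X unfolding vs_def by simp
    then have "T i = 0"
      unfolding T_def by (simp only: pm_comb_inner_contraction_eq_0[OF q_inv W V])
    then show "(-1) ^ i * T i = 0"
      by simp
  qed
  also have "T 0 = first_contraction q n c m W V X"
  proof -
    have "take 0 vs @ [A, B] @ drop (0 + 1) vs = A # (B # X) @ [V]" for A B
      unfolding vs_def by simp
    moreover have "vs ! 0 = W"
      unfolding vs_def by simp
    ultimately show ?thesis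
      unfolding T_def by (simp only: pm_comb_first_contraction[OF V])
  qed
  also have "T m = last_contraction q n c m W V X"
  proof -
    have m_eq: "m = Suc (length X)"
      using X m by linarith
    have "take m vs @ [A, B] @ drop (m + 1) vs = W # (X @ [A]) @ [B]" for A B
      unfolding vs_def m_eq by simp
    moreover have "vs ! m = V"
      unfolding vs_def m_eq by (simp add: nth_append)
    ultimately show ?thesis
      unfolding T_def by (simp only: pm_comb_last_contraction[OF W])
  qed
  finally show ?thesis
    by (simp add: vs_def)
qed

lemma Cons_snoc_word_iff:
  "1 \<le> m \<Longrightarrow> (length (W # X @ [V]) = m + 1 \<and> set (W # X @ [V]) \<subseteq> P)
    \<longleftrightarrow> (W \<in> P \<and> V \<in> P \<and> length X = m - 1 \<and> set X \<subseteq> P)"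
  by auto

lemma bar_d_pm_comb:
  assumes m: "1 \<le> m"
    and q_inv: "\<And>a b. a \<in> {1..n} \<Longrightarrow> b \<in> {1..n} \<Longrightarrow> q a b * q b a = 1"
  shows "bar_d q n m (pm_comb q n c m) vs =
    (if 2 \<le> length vs \<and> hd vs \<in> Pow {1..n} \<and> last vs \<in> Pow {1..n}
     then first_contraction q n c m (hd vs) (last vs) (butlast (tl vs))
       + (-1) ^ m * last_contraction q n c m (hd vs) (last vs) (butlast (tl vs))
     else 0)"
proof (cases "2 \<le> length vs \<and> hd vs \<in> Pow {1..n} \<and> last vs \<in> Pow {1..n}")
  case True
  then obtain W X V where vs: "vs = W # X @ [V]"
    using Cons_snoc_cases by blast
  with True have W: "W \<in> Pow {1..n}" and V: "V \<in> Pow {1..n}"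
    by simp_all
  show ?thesis
  proof (cases "length X = m - 1 \<and> set X \<subseteq> Pow {1..n}")
    case True
    then show ?thesis
      using bar_d_pm_comb_Cons_snoc[OF m q_inv W V] W V unfolding vs by simp
  next
    case False
    then have "bar_d q n m (pm_comb q n c m) vs = 0"
      using Cons_snoc_word_iff[OF m] unfolding bar_d_apply vs by auto
    then show ?thesis
      using W V unfolding vs by (simp add: contractions_eq_0_if_not_word[OF False])
  qed
next
  case False
  have not_word: "\<not> (length vs = m + 1 \<and> set vs \<subseteq> Pow {1..n})"
  proof
    assume word: "length vs = m + 1 \<and> set vs \<subseteq> Pow {1..n}"
    then have "2 \<le> length vs" "hd vs \<in> set vs" "last vs \<in> set vs"
      using m by (auto intro: hd_in_set last_in_set)
    with word False show False
      by blast
  qed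
  show ?thesis
    unfolding bar_d_apply if_not_P[OF not_word] if_not_P[OF False] ..
qed

lemma finite_multidx: "finite (multidx n m)"
proof (rule finite_subset)
  show "multidx n m \<subseteq> {\<beta>. \<forall>x. (x \<in> {1..n} \<longrightarrow> \<beta> x \<in> {..m}) \<and> (x \<notin> {1..n} \<longrightarrow> \<beta> x = 0)}"
    using le_bsize by (fastforce simp: multidx_def)
  show "finite {\<beta>. \<forall>x. (x \<in> {1..n} \<longrightarrow> \<beta> x \<in> {..m}) \<and> (x \<notin> {1..n} \<longrightarrow> \<beta> x = (0::nat))}"
    by (rule finite_set_of_finite_funs) auto
qed

lemma sum_multidx_reindex_dec:
  assumes j: "j \<in> {1..n}" and m: "1 \<le> m"
  shows "(\<Sum>\<beta>\<in>multidx n m. if \<beta> j = 0 then 0 else G \<beta>)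
    = (\<Sum>\<beta>\<in>multidx n (m - 1). G (\<beta>(j := Suc (\<beta> j))))"
proof -
  have "(\<Sum>\<beta>\<in>multidx n m. if \<beta> j = 0 then 0 else G \<beta>) = (\<Sum>\<beta>\<in>multidx n m. if \<beta> j \<noteq> 0 then G \<beta> else 0)"
    by (intro sum.cong) auto
  also have "\<dots> = (\<Sum>\<beta>\<in>{\<beta> \<in> multidx n m. \<beta> j \<noteq> 0}. G \<beta>)"
    by (rule sum.inter_filter[OF finite_multidx, symmetric])
  also have "\<dots> = (\<Sum>\<beta>\<in>multidx n (m - 1). G (\<beta>(j := Suc (\<beta> j))))"
  proof (rule sum.reindex_bij_witness[where j = "\<lambda>\<beta>. \<beta>(j := \<beta> j - 1)" and i = "\<lambda>\<beta>. \<beta>(j := Suc (\<beta> j))"])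
    fix \<beta>
    assume \<beta>: "\<beta> \<in> multidx n (m - 1)"
    have "bsize n (\<beta>(j := Suc (\<beta> j))) + \<beta> j = bsize n \<beta> + Suc (\<beta> j)"
      by (rule bsize_fun_upd[OF j])
    then show "\<beta>(j := Suc (\<beta> j)) \<in> {\<beta> \<in> multidx n m. \<beta> j \<noteq> 0}"
      using \<beta> j m by (auto simp: multidx_def)
  next
    fix \<beta>
    assume \<beta>: "\<beta> \<in> {\<beta> \<in> multidx n m. \<beta> j \<noteq> 0}"
    have "bsize n (\<beta>(j := \<beta> j - 1)) + \<beta> j = bsize n \<beta> + (\<beta> j - 1)"
      by (rule bsize_fun_upd[OF j])
    then show "\<beta>(j := \<beta> j - 1) \<in> multidx n (m - 1)"
      using \<beta> j by (auto simp: multidx_def)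
  qed auto
  finally show ?thesis .
qed

lemma sum_multidx_fbeta_dec:
  assumes m: "1 \<le> m"
  shows "(\<Sum>\<beta>\<in>multidx n m. \<Sum>j=1..n. if \<beta> j = 0 then 0 else g \<beta> j * fbeta q n (\<beta>(j := \<beta> j - 1)) X)
    = (\<Sum>\<beta>\<in>multidx n (m - 1). (\<Sum>j=1..n. g (\<beta>(j := Suc (\<beta> j))) j) * fbeta q n \<beta> X)"
proof -
  have "(\<Sum>\<beta>\<in>multidx n m. \<Sum>j=1..n. if \<beta> j = 0 then 0 else g \<beta> j * fbeta q n (\<beta>(j := \<beta> j - 1)) X)
      = (\<Sum>j=1..n. \<Sum>\<beta>\<in>multidx n m. if \<beta> j = 0 then 0 else g \<beta> j * fbeta q n (\<beta>(j := \<beta> j - 1)) X)"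
    by (rule sum.swap)
  also have "\<dots> = (\<Sum>j=1..n. \<Sum>\<beta>\<in>multidx n (m - 1). g (\<beta>(j := Suc (\<beta> j))) j * fbeta q n \<beta> X)"
    by (rule sum.cong[OF refl]) (subst sum_multidx_reindex_dec[OF _ m]; simp)
  also have "\<dots> = (\<Sum>\<beta>\<in>multidx n (m - 1). (\<Sum>j=1..n. g (\<beta>(j := Suc (\<beta> j))) j) * fbeta q n \<beta> X)"
    by (subst sum.swap) (simp add: sum_distrib_right)
  finally show ?thesis .
qed

definition bar_d_coeff :: "(nat \<Rightarrow> nat \<Rightarrow> 'k::field) \<Rightarrow> nat \<Rightarrow>
    ((nat \<Rightarrow> nat) \<Rightarrow> nat set \<Rightarrow> nat set \<Rightarrow> 'k) \<Rightarrow> nat \<Rightarrow> (nat \<Rightarrow> nat) \<Rightarrow> nat set \<Rightarrow> nat set \<Rightarrow> 'k" where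
  "bar_d_coeff q n c m \<beta> W V =
    (\<Sum>j=1..n. (\<Prod>k\<in>{1..<j}. q k j ^ (\<beta>(j := Suc (\<beta> j))) k)
       * left_mult_coeff q n c (\<beta>(j := Suc (\<beta> j))) j W V)
    + (-1) ^ m * (\<Sum>j=1..n. (\<Prod>k\<in>{j<..n}. q j k ^ (\<beta>(j := Suc (\<beta> j))) k)
       * right_mult_coeff q n c (\<beta>(j := Suc (\<beta> j))) j W V)"

lemma bar_d_pm_comb_eq_pm_comb:
  assumes m: "1 \<le> m"
    and q_inv: "\<And>a b. a \<in> {1..n} \<Longrightarrow> b \<in> {1..n} \<Longrightarrow> q a b * q b a = 1"
  shows "bar_d q n m (pm_comb q n c m) = pm_comb q n (bar_d_coeff q n c m) (m - 1)"
proof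
  fix vs
  have "first_contraction q n c m W V X + (-1) ^ m * last_contraction q n c m W V X
      = (\<Sum>\<beta>\<in>multidx n (m - 1). bar_d_coeff q n c m \<beta> W V * fbeta q n \<beta> X)" for W V X
    unfolding first_contraction_def last_contraction_def bar_d_coeff_def sum_multidx_fbeta_dec[OF m]
    by (simp add: sum.distrib sum_distrib_left algebra_simps)
  moreover have "bar_d q n m (pm_comb q n c m) vs =
    (if 2 \<le> length vs \<and> hd vs \<in> Pow {1..n} \<and> last vs \<in> Pow {1..n}
     then first_contraction q n c m (hd vs) (last vs) (butlast (tl vs))
       + (-1) ^ m * last_contraction q n c m (hd vs) (last vs) (butlast (tl vs))
     else 0)"
    by (rule bar_d_pm_comb[OF m q_inv])
  ultimately show "bar_d q n m (pm_comb q n c m) vs = pm_comb q n (bar_d_coeff q n c m) (m - 1) vs"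
    by (simp add: pm_comb_def[of q n "bar_d_coeff q n c m"])
qed

lemma bar_d_Pm:
  assumes "1 \<le> m"
    and "\<And>a b. a \<in> {1..n} \<Longrightarrow> b \<in> {1..n} \<Longrightarrow> q a b * q b a = 1"
    and "u \<in> Pm q n m"
  shows "bar_d q n m u \<in> Pm q n (m - 1)"
proof -
  obtain c where "u = pm_comb q n c m"
    using assms(3) by (auto simp: Pm_eq_range_pm_comb)
  then have "bar_d q n m u = pm_comb q n (bar_d_coeff q n c m) (m - 1)"
    using bar_d_pm_comb_eq_pm_comb[OF assms(1,2)] by simp
  then show ?thesis
    by (simp add: Pm_eq_range_pm_comb)
qed

section \<open>The differential of \<open>f\<^sub>\<beta>\<close>\<close>

definition ft_coeff :: "(nat \<Rightarrow> nat) \<Rightarrow> (nat \<Rightarrow> nat) \<Rightarrow> nat set \<Rightarrow> nat set \<Rightarrow> 'k::field" where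
  "ft_coeff \<beta> \<beta>' A B = (if \<beta>' = \<beta> \<and> A = {} \<and> B = {} then 1 else 0)"

lemma ft_eq_pm_comb:
  assumes "\<beta> \<in> multidx n m"
  shows "ft q n \<beta> = pm_comb q n (ft_coeff \<beta>) m"
proof
  fix ws
  show "ft q n \<beta> ws = pm_comb q n (ft_coeff \<beta>) m ws"
  proof (cases "2 \<le> length ws")
    case True
    then obtain W X V where ws: "ws = W # X @ [V]"
      by (rule Cons_snoc_cases)
    have "(\<Sum>\<beta>'\<in>multidx n m. ft_coeff \<beta> \<beta>' W V * fbeta q n \<beta>' X)
        = (\<Sum>\<beta>'\<in>multidx n m. if \<beta>' = \<beta> then (if W = {} \<and> V = {} then fbeta q n \<beta> X else 0) else 0)"
      by (intro sum.cong refl) (simp add: ft_coeff_def)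
    then show ?thesis
      using assms finite_multidx by (auto simp: ws ft_Cons_snoc pm_comb_def)
  qed (simp add: ft_eq_0_if_short pm_comb_def)
qed

lemma left_mult_coeff_ft_coeff:
  assumes "j \<in> {1..n}"
  shows "left_mult_coeff q n (ft_coeff \<beta>) \<beta>' j W V = (if \<beta>' = \<beta> \<and> V = {} \<and> W = {j} then 1 else 0)"
proof -
  have "left_mult_coeff q n (ft_coeff \<beta>) \<beta>' j W V = (\<Sum>A\<in>Pow {1..n}.
      if A = {} then lmul q n (ebas {}) (ebas {j}) W * (if \<beta>' = \<beta> \<and> V = {} then 1 else 0) else 0)"
    unfolding left_mult_coeff_def by (intro sum.cong refl) (simp add: ft_coeff_def)
  then show ?thesis
    using assms by (auto simp: sum_Pow_if_empty lmul_ebas_empty)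
qed

lemma right_mult_coeff_ft_coeff:
  assumes "j \<in> {1..n}"
  shows "right_mult_coeff q n (ft_coeff \<beta>) \<beta>' j W V = (if \<beta>' = \<beta> \<and> W = {} \<and> V = {j} then 1 else 0)"
proof -
  have "right_mult_coeff q n (ft_coeff \<beta>) \<beta>' j W V = (\<Sum>B\<in>Pow {1..n}.
      if B = {} then lmul q n (ebas {j}) (ebas {}) V * (if \<beta>' = \<beta> \<and> W = {} then 1 else 0) else 0)"
    unfolding right_mult_coeff_def by (intro sum.cong refl) (simp add: ft_coeff_def)
  then show ?thesis
    using assms by (auto simp: sum_Pow_if_empty lmul_ebas_empty)
qed

lemma sum_fbeta_dec_delta:
  assumes "\<beta> \<in> multidx n m"
  shows "(\<Sum>\<beta>'\<in>multidx n m. \<Sum>j=1..n. if \<beta>' j = 0 then 0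
      else g \<beta>' j * (if \<beta>' = \<beta> \<and> P j then 1 else 0) * fbeta q n (\<beta>'(j := \<beta>' j - 1)) X)
    = (\<Sum>j=1..n. if \<beta> j \<noteq> 0 \<and> P j then g \<beta> j * fbeta q n (\<beta>(j := \<beta> j - 1)) X else 0)"
proof -
  have "(\<Sum>j=1..n. if \<beta>' j = 0 then 0
      else g \<beta>' j * (if \<beta>' = \<beta> \<and> P j then 1 else 0) * fbeta q n (\<beta>'(j := \<beta>' j - 1)) X)
    = (if \<beta>' = \<beta> then (\<Sum>j=1..n. if \<beta> j \<noteq> 0 \<and> P j then g \<beta> j * fbeta q n (\<beta>(j := \<beta> j - 1)) X else 0)
       else 0)" for \<beta>'
    by (cases "\<beta>' = \<beta>") (auto intro!: sum.cong sum.neutral)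
  then show ?thesis
    using assms finite_multidx by simp
qed

lemma first_contraction_ft_coeff:
  assumes "\<beta> \<in> multidx n m"
  shows "first_contraction q n (ft_coeff \<beta>) m W V X = (\<Sum>j=1..n. if \<beta> j \<noteq> 0 \<and> V = {} \<and> W = {j}
      then (\<Prod>k\<in>{1..<j}. q k j ^ \<beta> k) * fbeta q n (\<beta>(j := \<beta> j - 1)) X else 0)"
proof -
  have "first_contraction q n (ft_coeff \<beta>) m W V X = (\<Sum>\<beta>'\<in>multidx n m. \<Sum>j=1..n. if \<beta>' j = 0 then 0
      else (\<Prod>k\<in>{1..<j}. q k j ^ \<beta>' k) * (if \<beta>' = \<beta> \<and> (V = {} \<and> W = {j}) then 1 else 0)
        * fbeta q n (\<beta>'(j := \<beta>' j - 1)) X)"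
    unfolding first_contraction_def by (intro sum.cong refl) (simp add: left_mult_coeff_ft_coeff)
  also have "\<dots> = (\<Sum>j=1..n. if \<beta> j \<noteq> 0 \<and> (V = {} \<and> W = {j})
      then (\<Prod>k\<in>{1..<j}. q k j ^ \<beta> k) * fbeta q n (\<beta>(j := \<beta> j - 1)) X else 0)"
    by (rule sum_fbeta_dec_delta[OF assms])
  finally show ?thesis .
qed

lemma last_contraction_ft_coeff:
  assumes "\<beta> \<in> multidx n m"
  shows "last_contraction q n (ft_coeff \<beta>) m W V X = (\<Sum>j=1..n. if \<beta> j \<noteq> 0 \<and> W = {} \<and> V = {j}
      then (\<Prod>k\<in>{j<..n}. q j k ^ \<beta> k) * fbeta q n (\<beta>(j := \<beta> j - 1)) X else 0)"
proof -
  have "last_contraction q n (ft_coeff \<beta>) m W V X = (\<Sum>\<beta>'\<in>multidx n m. \<Sum>j=1..n. if \<beta>' j = 0 then 0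
      else (\<Prod>k\<in>{j<..n}. q j k ^ \<beta>' k) * (if \<beta>' = \<beta> \<and> (W = {} \<and> V = {j}) then 1 else 0)
        * fbeta q n (\<beta>'(j := \<beta>' j - 1)) X)"
    unfolding last_contraction_def by (intro sum.cong refl) (simp add: right_mult_coeff_ft_coeff)
  also have "\<dots> = (\<Sum>j=1..n. if \<beta> j \<noteq> 0 \<and> (W = {} \<and> V = {j})
      then (\<Prod>k\<in>{j<..n}. q j k ^ \<beta> k) * fbeta q n (\<beta>(j := \<beta> j - 1)) X else 0)"
    by (rule sum_fbeta_dec_delta[OF assms])
  finally show ?thesis .
qed

lemma lact_fdec:
  "j \<in> {1..n} \<Longrightarrow> lact q n (ebas {j}) (fdec q n \<beta> j) (W # X @ [V]) =
    (if \<beta> j \<noteq> 0 \<and> V = {} \<and> W = {j} then fbeta q n (\<beta>(j := \<beta> j - 1)) X else 0)"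
  by (simp add: fdec_def lact_ft_Cons_snoc lact_def[of q n _ "\<lambda>_. 0"])

lemma ract_fdec:
  "j \<in> {1..n} \<Longrightarrow> ract q n (fdec q n \<beta> j) (ebas {j}) (W # X @ [V]) =
    (if \<beta> j \<noteq> 0 \<and> W = {} \<and> V = {j} then fbeta q n (\<beta>(j := \<beta> j - 1)) X else 0)"
  by (simp add: fdec_def ract_ft_Cons_snoc ract_def[of q n "\<lambda>_. 0"])

lemma lact_ract_fdec_eq_0_if_short:
  assumes "length ws < 2"
  shows "lact q n a (fdec q n \<beta> j) ws = 0" "ract q n (fdec q n \<beta> j) b ws = 0"
proof -
  have fdec_short: "fdec q n \<beta> j vs = 0" if "length vs < 2" for vs
    using that by (simp add: fdec_def ft_eq_0_if_short)
  show "lact q n a (fdec q n \<beta> j) ws = 0"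
    by (rule lact_eq_0_if_short[OF fdec_short assms])
  show "ract q n (fdec q n \<beta> j) b ws = 0"
    by (rule ract_eq_0_if_short[OF fdec_short assms])
qed

lemma bar_d_ft:
  assumes m: "1 \<le> m"
    and q_inv: "\<And>a b. a \<in> {1..n} \<Longrightarrow> b \<in> {1..n} \<Longrightarrow> q a b * q b a = 1"
    and \<beta>: "\<beta> \<in> multidx n m"
  shows "bar_d q n m (ft q n \<beta>) = (\<lambda>ws. \<Sum>j=1..n.
      (\<Prod>l\<in>{1..<j}. q l j ^ \<beta> l) * lact q n (ebas {j}) (fdec q n \<beta> j) ws
    + (-1) ^ m * (\<Prod>l\<in>{j<..n}. q j l ^ \<beta> l) * ract q n (fdec q n \<beta> j) (ebas {j}) ws)"
proof
  fix ws
  have lhs: "bar_d q n m (ft q n \<beta>) ws =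
    (if 2 \<le> length ws \<and> hd ws \<in> Pow {1..n} \<and> last ws \<in> Pow {1..n}
     then first_contraction q n (ft_coeff \<beta>) m (hd ws) (last ws) (butlast (tl ws))
       + (-1) ^ m * last_contraction q n (ft_coeff \<beta>) m (hd ws) (last ws) (butlast (tl ws))
     else 0)"
    unfolding ft_eq_pm_comb[OF \<beta>] by (rule bar_d_pm_comb[OF m q_inv])
  show "bar_d q n m (ft q n \<beta>) ws = (\<Sum>j=1..n.
      (\<Prod>l\<in>{1..<j}. q l j ^ \<beta> l) * lact q n (ebas {j}) (fdec q n \<beta> j) ws
    + (-1) ^ m * (\<Prod>l\<in>{j<..n}. q j l ^ \<beta> l) * ract q n (fdec q n \<beta> j) (ebas {j}) ws)"
  proof (cases "2 \<le> length ws")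
    case False
    then show ?thesis
      using lhs by (simp add: lact_ract_fdec_eq_0_if_short)
  next
    case True
    then obtain W X V where ws: "ws = W # X @ [V]"
      by (rule Cons_snoc_cases)
    have "(\<Sum>j=1..n. (\<Prod>l\<in>{1..<j}. q l j ^ \<beta> l) * lact q n (ebas {j}) (fdec q n \<beta> j) ws
        + (-1) ^ m * (\<Prod>l\<in>{j<..n}. q j l ^ \<beta> l) * ract q n (fdec q n \<beta> j) (ebas {j}) ws)
      = (\<Sum>j=1..n. (if \<beta> j \<noteq> 0 \<and> V = {} \<and> W = {j}
            then (\<Prod>k\<in>{1..<j}. q k j ^ \<beta> k) * fbeta q n (\<beta>(j := \<beta> j - 1)) X else 0)
        + (-1) ^ m * (if \<beta> j \<noteq> 0 \<and> W = {} \<and> V = {j}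
            then (\<Prod>k\<in>{j<..n}. q j k ^ \<beta> k) * fbeta q n (\<beta>(j := \<beta> j - 1)) X else 0))"
      unfolding ws by (intro sum.cong refl) (simp add: lact_fdec ract_fdec)
    also have "\<dots> = bar_d q n m (ft q n \<beta>) ws"
    proof (cases "W \<in> Pow {1..n} \<and> V \<in> Pow {1..n}")
      case True
      then show ?thesis
        unfolding lhs unfolding ws
        by (simp add: first_contraction_ft_coeff[OF \<beta>] last_contraction_ft_coeff[OF \<beta>] sum.distrib sum_distrib_left)
    next
      case False
      then show ?thesis
        unfolding lhs unfolding ws by (auto intro!: sum.neutral)
    qed
    finally show ?thesis ..
  qed
qed

theorem lemma3p3:
  fixes q :: "nat \<Rightarrow> nat \<Rightarrow> 'k::field_char_0" and n :: nat
  assumes "n \<ge> 1"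
    and "\<forall>i\<in>{1..n}. \<forall>j\<in>{1..n}. q i j \<noteq> 0"
    and "\<forall>i\<in>{1..n}. \<forall>j\<in>{1..n}. q j i = inverse (q i j)"
    and "\<forall>i\<in>{1..n}. q i i = -1"
  shows "(\<forall>m\<ge>1. \<forall>u\<in>Pm q n m. bar_d q n m u \<in> Pm q n (m - 1))
       \<and> (\<forall>m\<ge>1. \<forall>\<beta>\<in>multidx n m. bar_d q n m (ft q n \<beta>) =
            (\<lambda>ws. \<Sum>j=1..n.
               (\<Prod>l\<in>{1..<j}. q l j ^ \<beta> l) * lact q n (ebas {j}) (fdec q n \<beta> j) ws
             + (-1)^m * (\<Prod>l\<in>{j<..n}. q j l ^ \<beta> l) * ract q n (fdec q n \<beta> j) (ebas {j}) ws))"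
proof -
  have q_inv: "q a b * q b a = 1" if "a \<in> {1..n}" "b \<in> {1..n}" for a b
  proof -
    have "q a b \<noteq> 0" "q b a = inverse (q a b)"
      using assms(2,3) that by blast+
    then show ?thesis
      by simp
  qed
  show ?thesis
    using bar_d_Pm[where q = q and n = n, OF _ q_inv] bar_d_ft[where q = q and n = n, OF _ q_inv] by blast
qed

end
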